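(* For an ideal $\mathcal{I}$ on $\omega$, the following are equivalent: (1) Player I does not have a winning strategy in the tallness* game with respect to $\mathcal{I}$; (2) for every sequence $\langle X_n:n\in\omega\rangle$ of elements of $\mathcal{I}^+$ there is $I\in\mathcal{I}$ such that $I\cap X_n$ is infinite for every $n\in\omega$.
   Context: Ideals on $\omega$ are assumed to contain all finite sets; $\mathcal{I}^+=\mathcal{P}(\omega)\setminus\mathcal{I}$. Tallness* game with respect to $\mathcal{I}$: at round $k$, Player I plays $n_k\in\omega$ with $n_0<n_1<\cdots$, then Player II plays $i_k\in\{0,1\}$. Player II wins iff either $\{n_k:k\in\omega\}\in\mathcal{I}$, or ($\{n_k:k\in\omega\}\in\mathcal{I}^+$ and $\{n_k:i_k=1\}$ is infinite and belongs to $\mathcal{I}$). *)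

theory Defs
  imports Main
begin

definition is_ideal :: "nat set set \<Rightarrow> bool" where
  "is_ideal J \<longleftrightarrow> (\<forall>A\<in>J. \<forall>B. B \<subseteq> A \<longrightarrow> B \<in> J)
                 \<and> (\<forall>A\<in>J. \<forall>B\<in>J. A \<union> B \<in> J)
                 \<and> (\<forall>A. finite A \<longrightarrow> A \<in> J)
                 \<and> UNIV \<notin> J"

text \<open>A strategy for Player I maps the history of Player II's moves (a list of bits)
  to Player I's next natural number. Given II's moves i, the k-th move of I is:\<close>
definition play_I :: "(bool list \<Rightarrow> nat) \<Rightarrow> (nat \<Rightarrow> bool) \<Rightarrow> nat \<Rightarrow> nat" where
  "play_I \<sigma> i k = \<sigma> (map i [0..<k])"

definition tall_II_wins :: "nat set set \<Rightarrow> (nat \<Rightarrow> nat) \<Rightarrow> (nat \<Rightarrow> bool) \<Rightarrow> bool" where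
  "tall_II_wins J n i \<longleftrightarrow>
     range n \<in> J \<or>
     (range n \<notin> J \<and> infinite {n k | k. i k} \<and> {n k | k. i k} \<in> J)"

definition tall_I_winning_strategy :: "nat set set \<Rightarrow> (bool list \<Rightarrow> nat) \<Rightarrow> bool" where
  "tall_I_winning_strategy J \<sigma> \<longleftrightarrow>
     (\<forall>i. strict_mono (play_I \<sigma> i) \<and> \<not> tall_II_wins J (play_I \<sigma> i) i)"

end

theory Submission
  imports Defs "HOL-Library.Infinite_Set" "HOL-Library.Countable" "HOL-Library.Nat_Bijection"
begin

text \<open>
  If (2) holds and \<sigma> is a strategy for Player I, consider the countably many sets
  Z(s) of moves that \<sigma> makes after a finite history s of II extended by zeros.
  Were \<sigma> winning, each Z(s) would be positive, so some A in the ideal meets all of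
  them; let II answer 1 exactly when I plays into A. Then II's 1-set lies in A, hence
  must be finite, but after II's last 1 Player I plays into some Z(s), eventually
  hits A, and so forces another 1.

  Conversely, if positive sets X m witness the failure of (2), Player I plays
  increasingly, always into X m where m is read off the number c of 1s played so far
  by c = prod_encode (m, N). If II plays finitely many 1s, a tail of one X m is
  played, so the moves form a positive set; otherwise II's 1-set meets every X m
  above every bound N, so it is positive as well.
\<close>

lemma ideal_finite: "is_ideal J \<Longrightarrow> finite A \<Longrightarrow> A \<in> J"
  by (simp add: is_ideal_def)

lemma ideal_subset: "is_ideal J \<Longrightarrow> A \<in> J \<Longrightarrow> B \<subseteq> A \<Longrightarrow> B \<in> J"
  unfolding is_ideal_def by blast

lemma ideal_subset_finite_Un:
  assumes "is_ideal J" "A \<in> J" "finite F" "B \<subseteq> F \<union> A"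
  shows "B \<in> J"
proof -
  have "F \<union> A \<in> J"
    using assms(1-3) ideal_finite[OF assms(1)] unfolding is_ideal_def by blast
  then show ?thesis using assms(1,4) ideal_subset by blast
qed

lemma ideal_positive_infinite: "is_ideal J \<Longrightarrow> X \<notin> J \<Longrightarrow> infinite X"
  using ideal_finite by blast

lemma range_strict_mono_finite_iff:
  assumes "strict_mono (n :: nat \<Rightarrow> nat)"
  shows "finite {n k | k. P k} \<longleftrightarrow> finite {k. P k}"
proof -
  have "{n k | k. P k} = n ` {k. P k}" by auto
  then show ?thesis
    using strict_mono_imp_inj_on[OF assms] finite_image_iff inj_on_subset by (metis subset_UNIV)
qed

definition zero_extension_moves :: "(bool list \<Rightarrow> nat) \<Rightarrow> bool list \<Rightarrow> nat set" where
  "zero_extension_moves \<sigma> s = range (\<lambda>j. \<sigma> (s @ replicate j False))"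

lemma winning_zero_extension_moves_positive:
  assumes J: "is_ideal J" and W: "tall_I_winning_strategy J \<sigma>"
  shows "zero_extension_moves \<sigma> s \<notin> J"
proof
  assume Z: "zero_extension_moves \<sigma> s \<in> J"
  define i where "i k = (k < length s \<and> s ! k)" for k
  have history: "map i [0..<k] = s @ replicate (k - length s) False" if "length s \<le> k" for k
    using that by (intro nth_equalityI) (auto simp: i_def nth_append)
  have "range (play_I \<sigma> i) \<subseteq> play_I \<sigma> i ` {..<length s} \<union> zero_extension_moves \<sigma> s"
  proof
    fix x assume "x \<in> range (play_I \<sigma> i)"
    then obtain k where "x = play_I \<sigma> i k" by auto
    then show "x \<in> play_I \<sigma> i ` {..<length s} \<union> zero_extension_moves \<sigma> s"
      by (cases "k < length s") (auto simp: play_I_def zero_extension_moves_def history)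
  qed
  then have "range (play_I \<sigma> i) \<in> J"
    using ideal_subset_finite_Un[OF J Z] by blast
  then show False
    using W unfolding tall_I_winning_strategy_def tall_II_wins_def by blast
qed

primrec membership_history :: "(bool list \<Rightarrow> nat) \<Rightarrow> nat set \<Rightarrow> nat \<Rightarrow> bool list" where
  "membership_history \<sigma> A 0 = []"
| "membership_history \<sigma> A (Suc k) =
     membership_history \<sigma> A k @ [\<sigma> (membership_history \<sigma> A k) \<in> A]"

lemma winning_avoids_some_zero_extension:
  assumes J: "is_ideal J" and W: "tall_I_winning_strategy J \<sigma>" and A: "A \<in> J"
  shows "\<exists>s. A \<inter> zero_extension_moves \<sigma> s = {}"
proof (rule ccontr)
  assume meets: "\<nexists>s. A \<inter> zero_extension_moves \<sigma> s = {}"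
  define h where "h = membership_history \<sigma> A"
  define i where "i k = (\<sigma> (h k) \<in> A)" for k
  have map_i: "map i [0..<k] = h k" for k
    by (induction k) (auto simp: i_def h_def)
  define n where "n = play_I \<sigma> i"
  have n: "n k = \<sigma> (h k)" for k by (simp add: n_def play_I_def map_i)
  have sm: "strict_mono n" and lost: "\<not> tall_II_wins J n i"
    using W unfolding tall_I_winning_strategy_def n_def by auto
  have "{n k | k. i k} \<subseteq> A" by (auto simp: i_def n)
  then have "{n k | k. i k} \<in> J" using J A ideal_subset by blast
  then have "finite {n k | k. i k}" using lost unfolding tall_II_wins_def by blast
  then obtain K where K: "{k. i k} \<subseteq> {..<K}"
    using range_strict_mono_finite_iff[OF sm] finite_nat_bounded by metis
  have h_tail: "h (K + j) = h K @ replicate j False" for j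
  proof (induction j)
    case (Suc j)
    have "\<not> i (K + j)" using K by auto
    with Suc show ?case by (simp add: i_def h_def replicate_append_same[symmetric])
  qed simp
  obtain j where "\<sigma> (h K @ replicate j False) \<in> A"
    using meets by (auto simp: zero_extension_moves_def)
  then have "i (K + j)" by (simp add: i_def h_tail)
  then show False using K by auto
qed

lemma no_winning_strategy_if_ideal_set_meets_positives:
  assumes J: "is_ideal J"
    and H: "\<forall>X :: nat \<Rightarrow> nat set. (\<forall>m. X m \<notin> J) \<longrightarrow> (\<exists>A\<in>J. \<forall>m. infinite (A \<inter> X m))"
  shows "\<not> tall_I_winning_strategy J \<sigma>"
proof
  assume W: "tall_I_winning_strategy J \<sigma>"
  define X where "X m = zero_extension_moves \<sigma> (from_nat m)" for m
  have "\<forall>m. X m \<notin> J"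
    using winning_zero_extension_moves_positive[OF J W] by (simp add: X_def)
  with H obtain A where "A \<in> J" and "\<forall>m. infinite (A \<inter> X m)" by blast
  then have "A \<inter> zero_extension_moves \<sigma> s \<noteq> {}" for s
    by (metis X_def from_nat_to_nat finite.emptyI)
  then show False using winning_avoids_some_zero_extension[OF J W \<open>A \<in> J\<close>] by blast
qed

definition ones_before :: "(nat \<Rightarrow> bool) \<Rightarrow> nat \<Rightarrow> nat" where
  "ones_before i k = length (filter i [0..<k])"

lemma ones_before_0 [simp]: "ones_before i 0 = 0"
  and ones_before_Suc [simp]: "ones_before i (Suc k) = ones_before i k + (if i k then 1 else 0)"
  by (simp_all add: ones_before_def)

lemma ones_before_le: "ones_before i k \<le> k"
  by (induction k) auto

lemma ones_before_stable:
  assumes "{k. i k} \<subseteq> {..<K}" "K \<le> k"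
  shows "ones_before i k = ones_before i K"
  using assms(2) by (induction k rule: dec_induct) (use assms(1) in auto)

lemma ones_before_unbounded:
  assumes "infinite {k. i k}"
  shows "\<exists>k. N \<le> ones_before i k"
proof (induction N)
  case (Suc N)
  then obtain k where k: "N \<le> ones_before i k" by blast
  obtain k' where "i k'" "k \<le> k'"
    using assms by (metis infinite_nat_iff_unbounded_le mem_Collect_eq)
  moreover have "mono (ones_before i)" by (rule mono_iff_le_Suc[THEN iffD2]) simp
  ultimately have "Suc N \<le> ones_before i (Suc k')" using k monoD by fastforce
  then show ?case by blast
qed simp

text \<open>Since the count grows by at most one per step, it takes every value at a 1.\<close>

lemma ones_before_attains:
  assumes "infinite {k. i k}"
  shows "\<exists>k. i k \<and> ones_before i k = N"
proof -
  have ex: "\<exists>k. N < ones_before i (Suc k)"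
    using ones_before_unbounded[OF assms, of "Suc N"]
    by (metis Suc_le_eq not0_implies_Suc not_less_zero ones_before_0)
  define k where "k = (LEAST k. N < ones_before i (Suc k))"
  have above: "N < ones_before i (Suc k)" unfolding k_def using ex by (rule LeastI_ex)
  have "ones_before i k \<le> N"
  proof (cases k)
    case (Suc k')
    then have "\<not> N < ones_before i (Suc k')" unfolding k_def by (metis lessI not_less_Least)
    then show ?thesis using Suc by simp
  qed simp
  with above show ?thesis by (auto split: if_splits)
qed

text \<open>The history is reversed so that the recursion peels off the most recent move.\<close>

fun chase :: "(nat \<Rightarrow> nat set) \<Rightarrow> bool list \<Rightarrow> nat" where
  "chase Y [] = (LEAST x. x \<in> Y 0)"
| "chase Y (b # r) = (LEAST x. x \<in> Y (length (filter id (b # r))) \<and> chase Y r < x)"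

definition chase_strategy :: "(nat \<Rightarrow> nat set) \<Rightarrow> bool list \<Rightarrow> nat" where
  "chase_strategy Y s = chase Y (rev s)"

lemma play_chase_0: "play_I (chase_strategy Y) i 0 = (LEAST x. x \<in> Y 0)"
  by (simp add: play_I_def chase_strategy_def)

lemma play_chase_Suc:
  "play_I (chase_strategy Y) i (Suc k) =
     (LEAST x. x \<in> Y (ones_before i (Suc k)) \<and> play_I (chase_strategy Y) i k < x)"
  by (simp add: play_I_def chase_strategy_def ones_before_def rev_filter[symmetric] filter_map)

lemma play_chase:
  assumes Y: "\<And>c. infinite (Y c)" and n: "n = play_I (chase_strategy Y) i"
  shows play_chase_in: "n k \<in> Y (ones_before i k)"
    and play_chase_less: "n k < n (Suc k)"
    and play_chase_least: "x \<in> Y (ones_before i (Suc k)) \<Longrightarrow> n k < x \<Longrightarrow> n (Suc k) \<le> x"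
proof -
  have ex: "\<exists>x. x \<in> Y c \<and> a < x" for c a
    using Y[of c] unfolding infinite_nat_iff_unbounded by blast
  show "n k \<in> Y (ones_before i k)"
    using LeastI_ex[OF ex] LeastI_ex[OF infinite_imp_nonempty[OF Y, unfolded ex_in_conv[symmetric]]]
    by (cases k) (auto simp: n play_chase_0 play_chase_Suc)
  show "n k < n (Suc k)"
    using LeastI_ex[OF ex] by (auto simp: n play_chase_Suc)
  show "x \<in> Y (ones_before i (Suc k)) \<Longrightarrow> n k < x \<Longrightarrow> n (Suc k) \<le> x"
    by (simp add: n play_chase_Suc Least_le)
qed

lemma play_chase_covers_tail:
  assumes Y: "\<And>c. infinite (Y c)" and n: "n = play_I (chase_strategy Y) i"
    and K: "{k. i k} \<subseteq> {..<K}"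
  shows "Y (ones_before i K) \<subseteq> {..n K} \<union> range n"
proof
  fix x assume x: "x \<in> Y (ones_before i K)"
  show "x \<in> {..n K} \<union> range n"
  proof (cases "x \<le> n K")
    case False
    have sm: "strict_mono n" using play_chase_less[OF Y n] by (simp add: strict_mono_Suc_iff)
    define S where "S = {k. K \<le> k \<and> n k < x}"
    have "finite S"
      by (rule finite_subset[of _ "{..<x}"])
        (auto simp: S_def intro: le_less_trans[OF strict_mono_imp_increasing[OF sm]])
    moreover have "K \<in> S" using False by (simp add: S_def)
    ultimately have k: "Max S \<in> S" and "Suc (Max S) \<notin> S"
      using Max_in Max_ge Suc_n_not_le_n by (blast, metis)
    then have "x \<le> n (Suc (Max S))" by (auto simp: S_def)
    moreover have "n (Suc (Max S)) \<le> x"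
    proof (rule play_chase_least[OF Y n])
      show "x \<in> Y (ones_before i (Suc (Max S)))"
        using x k ones_before_stable[OF K, of "Suc (Max S)"] by (simp add: S_def)
    qed (use k in \<open>simp add: S_def\<close>)
    ultimately show ?thesis by (metis antisym rangeI UnI2)
  qed simp
qed

text \<open>I's move after c ones exceeds c, so an infinite 1-set of II escapes each bound.\<close>

lemma chase_strategy_winning:
  assumes J: "is_ideal J" and Y: "\<And>c. Y c \<notin> J"
    and bounded: "\<And>A. A \<in> J \<Longrightarrow> \<exists>c. A \<inter> Y c \<subseteq> {..<c}"
  shows "tall_I_winning_strategy J (chase_strategy Y)"
  unfolding tall_I_winning_strategy_def
proof
  fix i
  define n where "n = play_I (chase_strategy Y) i"
  have Yinf: "infinite (Y c)" for c using ideal_positive_infinite[OF J Y] .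
  have sm: "strict_mono n" using play_chase_less[OF Yinf n_def] by (simp add: strict_mono_Suc_iff)
  have "\<not> tall_II_wins J n i"
  proof (cases "finite {k. i k}")
    case True
    then obtain K where K: "{k. i k} \<subseteq> {..<K}" using finite_nat_bounded by blast
    have "range n \<notin> J"
      using ideal_subset_finite_Un[OF J _ _ play_chase_covers_tail[OF Yinf n_def K]] Y by blast
    moreover have "finite {n k | k. i k}" using True range_strict_mono_finite_iff[OF sm] by blast
    ultimately show ?thesis unfolding tall_II_wins_def by blast
  next
    case False
    have "{n k | k. i k} \<notin> J"
    proof
      assume "{n k | k. i k} \<in> J"
      then obtain c where c: "{n k | k. i k} \<inter> Y c \<subseteq> {..<c}" using bounded by blast
      obtain k where "i k" and k: "ones_before i k = c" using ones_before_attains[OF False] by blast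
      then have "n k \<in> {n k | k. i k} \<inter> Y c" using play_chase_in[OF Yinf n_def, of k] by auto
      moreover have "c \<le> n k"
        using k ones_before_le[of i k] strict_mono_imp_increasing[OF sm, of k] by simp
      ultimately show False using c by auto
    qed
    moreover have "{n k | k. i k} \<subseteq> range n" by auto
    ultimately show ?thesis
      using J ideal_subset unfolding tall_II_wins_def by blast
  qed
  with sm show "strict_mono (play_I (chase_strategy Y) i) \<and> \<not> tall_II_wins J (play_I (chase_strategy Y) i) i"
    by (simp add: n_def)
qed

lemma winning_strategy_if_positives_unmet:
  assumes J: "is_ideal J" and X: "\<And>m. X m \<notin> J"
    and unmet: "\<And>A. A \<in> J \<Longrightarrow> \<exists>m. finite (A \<inter> X m)"
  shows "tall_I_winning_strategy J (chase_strategy (\<lambda>c. X (fst (prod_decode c))))"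
proof (rule chase_strategy_winning[OF J X])
  fix A assume "A \<in> J"
  then obtain m N where "A \<inter> X m \<subseteq> {..<N}"
    using unmet finite_nat_bounded by metis
  moreover have "N \<le> prod_encode (m, N)" by (rule le_prod_encode_2)
  ultimately show "\<exists>c. A \<inter> X (fst (prod_decode c)) \<subseteq> {..<c}"
    by (intro exI[of _ "prod_encode (m, N)"]) auto
qed

theorem mainTheorem15:
  assumes "is_ideal J"
  shows "(\<not> (\<exists>\<sigma>. tall_I_winning_strategy J \<sigma>)) \<longleftrightarrow>
         (\<forall>X :: nat \<Rightarrow> nat set. (\<forall>m. X m \<notin> J) \<longrightarrow>
            (\<exists>A\<in>J. \<forall>m. infinite (A \<inter> X m)))"
  using winning_strategy_if_positives_unmet[OF assms]
    no_winning_strategy_if_ideal_set_meets_positives[OF assms]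
  by blast

end
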